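(* If $(X_A,\sigma_A)$ and $(X_B,\sigma_B)$ are one-sided flow equivalent, then they are continuously orbit equivalent.
   Context: Let $N,M>1$ and let $A$ ($N\times N$), $B$ ($M\times M$) be irreducible $\{0,1\}$-matrices which are not permutation matrices. $X_A$ is the compact space of sequences $(x_n)_{n\in\mathbb N}$ with $x_n\in\{1,\dots,N\}$, $A(x_n,x_{n+1})=1$, and $\sigma_A((x_n)_n)=(x_{n+1})_n$; similarly $(X_B,\sigma_B)$. $\mathbb Z_+$, $\mathbb R_+$ denote nonnegative integers/reals. $H^A$ is the quotient of $C(X_A,\mathbb Z)$ by $\{u-u\circ\sigma_A\}$, $H^A_+$ the classes of $\mathbb Z_+$-valued continuous functions; $[f]\in H^A_+$ is an order unit if for every $[u]\in H^A$ some $n\in\mathbb N$ has $n[f]-[u]\in H^A_+$. A suspension triplet for $(X_A,\sigma_A)$ is $(l,k,b)$ with $l,k\in C(X_A,\mathbb R_+)$, $b\in C(X_A,\mathbb R)$, $c=l-k$ integer-valued with $[c]$ an order unit, and $l-b$, $k-b\circ\sigma_A$ $\mathbb Z_+$-valued. $S^{l,k}_{A,b}$ is the quotient of $\{(x,r)\in X_A\times\mathbb R: r\ge b(x)\}$ by the equivalence relation generated by $(x,r)\sim(\sigma_A(x),r-c(x))$ for $r\ge l(x)$, with classes $[x,r]$ and flow $\phi_{A,t}([x,r])=[x,r+t]$ ($t\in\mathbb R_+$); $S^1_A:=S^{1,0}_{A,0}$ and $s_A(x)=[x,0]$. One-sided flow equivalence: there are suspension triplets $(l_1,k_1,b_1)$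 for $A$ and $(l_2,k_2,b_2)$ for $B$, a homeomorphism $h:X_A\to X_B$ and continuous $\Phi_1:S^{l_1,k_1}_{A,b_1}\to S^1_B$, $\Phi_2:S^{l_2,k_2}_{B,b_2}\to S^1_A$ with $\Phi_1\circ\phi_{A,t}=\phi_{B,t}\circ\Phi_1$, $\Phi_2\circ\phi_{B,t}=\phi_{A,t}\circ\Phi_2$ for all $t\in\mathbb R_+$, $\Phi_1([x,b_1(x)])=s_B(h(x))$ and $\Phi_2([y,b_2(y)])=s_A(h^{-1}(y))$. Continuous orbit equivalence: there are a homeomorphism $h:X_A\to X_B$ and continuous $k_1,l_1:X_A\to\mathbb Z_+$, $k_2,l_2:X_B\to\mathbb Z_+$ with $\sigma_B^{k_1(x)}(h(\sigma_A(x)))=\sigma_B^{l_1(x)}(h(x))$ for all $x\in X_A$ and $\sigma_A^{k_2(y)}(h^{-1}(\sigma_B(y)))=\sigma_A^{l_2(y)}(h^{-1}(y))$ for all $y\in X_B$. *)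

theory Defs
  imports "HOL-Analysis.Analysis"
begin

text \<open>Matrices are functions nat => nat => nat; an N x N matrix uses the indices 1..N.\<close>

definition zero_one_matrix :: "nat \<Rightarrow> (nat \<Rightarrow> nat \<Rightarrow> nat) \<Rightarrow> bool" where
  "zero_one_matrix N A \<longleftrightarrow> (\<forall>i\<in>{1..N}. \<forall>j\<in>{1..N}. A i j \<in> {0,1})"

fun mat_pow :: "nat \<Rightarrow> (nat \<Rightarrow> nat \<Rightarrow> nat) \<Rightarrow> nat \<Rightarrow> nat \<Rightarrow> nat \<Rightarrow> nat" where
  "mat_pow N A 0 i j = (if i = j then 1 else 0)"
| "mat_pow N A (Suc n) i j = (\<Sum>m\<in>{1..N}. mat_pow N A n i m * A m j)"

definition irreducible_matrix :: "nat \<Rightarrow> (nat \<Rightarrow> nat \<Rightarrow> nat) \<Rightarrow> bool" where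
  "irreducible_matrix N A \<longleftrightarrow> (\<forall>i\<in>{1..N}. \<forall>j\<in>{1..N}. \<exists>n>0. mat_pow N A n i j > 0)"

definition permutation_matrix :: "nat \<Rightarrow> (nat \<Rightarrow> nat \<Rightarrow> nat) \<Rightarrow> bool" where
  "permutation_matrix N A \<longleftrightarrow> zero_one_matrix N A \<and>
     (\<forall>i\<in>{1..N}. \<exists>!j. j \<in> {1..N} \<and> A i j = 1) \<and>
     (\<forall>j\<in>{1..N}. \<exists>!i. i \<in> {1..N} \<and> A i j = 1)"

definition XA :: "nat \<Rightarrow> (nat \<Rightarrow> nat \<Rightarrow> nat) \<Rightarrow> (nat \<Rightarrow> nat) set" where
  "XA N A = {x. \<forall>n. x n \<in> {1..N} \<and> A (x n) (x (Suc n)) = 1}"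

text \<open>The shift (the same map for every X_A); nat => nat carries the product topology.\<close>
definition shift :: "(nat \<Rightarrow> nat) \<Rightarrow> (nat \<Rightarrow> nat)" where
  "shift x = (\<lambda>n. x (Suc n))"

definition cont_int :: "(nat \<Rightarrow> nat) set \<Rightarrow> ((nat \<Rightarrow> nat) \<Rightarrow> real) \<Rightarrow> bool" where
  "cont_int X f \<longleftrightarrow> continuous_on X f \<and> (\<forall>x\<in>X. f x \<in> \<int>)"

definition cont_nonneg_int :: "(nat \<Rightarrow> nat) set \<Rightarrow> ((nat \<Rightarrow> nat) \<Rightarrow> real) \<Rightarrow> bool" where
  "cont_nonneg_int X f \<longleftrightarrow> cont_int X f \<and> (\<forall>x\<in>X. f x \<ge> 0)"

text \<open>[g] lies in H^A_+ : g is cohomologous (by a coboundary u - u o sigma, u in C(X,Z))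
  to a Z_+-valued continuous function.\<close>
definition in_H_plus :: "(nat \<Rightarrow> nat) set \<Rightarrow> ((nat \<Rightarrow> nat) \<Rightarrow> real) \<Rightarrow> bool" where
  "in_H_plus X g \<longleftrightarrow> (\<exists>f u. cont_nonneg_int X f \<and> cont_int X u \<and>
       (\<forall>x\<in>X. g x = f x + (u x - u (shift x))))"

definition order_unit :: "(nat \<Rightarrow> nat) set \<Rightarrow> ((nat \<Rightarrow> nat) \<Rightarrow> real) \<Rightarrow> bool" where
  "order_unit X f \<longleftrightarrow> in_H_plus X f \<and>
     (\<forall>u. cont_int X u \<longrightarrow> (\<exists>n::nat. in_H_plus X (\<lambda>x. real n * f x - u x)))"

definition suspension_triplet ::
  "(nat \<Rightarrow> nat) set \<Rightarrow> ((nat \<Rightarrow> nat) \<Rightarrow> real) \<Rightarrow> ((nat \<Rightarrow> nat) \<Rightarrow> real) \<Rightarrow> ((nat \<Rightarrow> nat) \<Rightarrow> real) \<Rightarrow> bool" where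
  "suspension_triplet X l k b \<longleftrightarrow>
     continuous_on X l \<and> (\<forall>x\<in>X. l x \<ge> 0) \<and>
     continuous_on X k \<and> (\<forall>x\<in>X. k x \<ge> 0) \<and>
     continuous_on X b \<and>
     cont_int X (\<lambda>x. l x - k x) \<and> order_unit X (\<lambda>x. l x - k x) \<and>
     (\<forall>x\<in>X. l x - b x \<in> \<int> \<and> l x - b x \<ge> 0) \<and>
     (\<forall>x\<in>X. k x - b (shift x) \<in> \<int> \<and> k x - b (shift x) \<ge> 0)"

definition susp_dom :: "(nat \<Rightarrow> nat) set \<Rightarrow> ((nat \<Rightarrow> nat) \<Rightarrow> real) \<Rightarrow> ((nat \<Rightarrow> nat) \<times> real) set" where
  "susp_dom X b = {(x, r). x \<in> X \<and> r \<ge> b x}"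

definition susp_step ::
  "(nat \<Rightarrow> nat) set \<Rightarrow> ((nat \<Rightarrow> nat) \<Rightarrow> real) \<Rightarrow> ((nat \<Rightarrow> nat) \<Rightarrow> real) \<Rightarrow> ((nat \<Rightarrow> nat) \<Rightarrow> real)
    \<Rightarrow> (((nat \<Rightarrow> nat) \<times> real) \<times> ((nat \<Rightarrow> nat) \<times> real)) set" where
  "susp_step X l k b = {((x, r), (shift x, r - (l x - k x))) | x r. x \<in> X \<and> r \<ge> b x \<and> r \<ge> l x}"

definition susp_rel ::
  "(nat \<Rightarrow> nat) set \<Rightarrow> ((nat \<Rightarrow> nat) \<Rightarrow> real) \<Rightarrow> ((nat \<Rightarrow> nat) \<Rightarrow> real) \<Rightarrow> ((nat \<Rightarrow> nat) \<Rightarrow> real)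
    \<Rightarrow> (((nat \<Rightarrow> nat) \<times> real) \<times> ((nat \<Rightarrow> nat) \<times> real)) set" where
  "susp_rel X l k b = Id_on (susp_dom X b) \<union> (susp_step X l k b \<union> (susp_step X l k b)\<inverse>)\<^sup>+"

definition susp_space ::
  "(nat \<Rightarrow> nat) set \<Rightarrow> ((nat \<Rightarrow> nat) \<Rightarrow> real) \<Rightarrow> ((nat \<Rightarrow> nat) \<Rightarrow> real) \<Rightarrow> ((nat \<Rightarrow> nat) \<Rightarrow> real)
    \<Rightarrow> ((nat \<Rightarrow> nat) \<times> real) set set" where
  "susp_space X l k b = susp_dom X b // susp_rel X l k b"

definition quot_top :: "'a topology \<Rightarrow> ('a \<times> 'a) set \<Rightarrow> 'a set topology" where
  "quot_top T R = topology (\<lambda>U. U \<subseteq> topspace T // R \<and> openin T (\<Union>U))"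


lemma istopology_quot_top:
  assumes "equiv (topspace T) R"
  shows "istopology (\<lambda>U. U \<subseteq> topspace T // R \<and> openin T (\<Union>U))"
  unfolding istopology_def
proof (rule conjI; intro allI impI)
  fix U V assume U: "U \<subseteq> topspace T // R \<and> openin T (\<Union>U)"
    and V: "V \<subseteq> topspace T // R \<and> openin T (\<Union>V)"
  have eq: "\<Union>(U \<inter> V) = \<Union>U \<inter> \<Union>V"
  proof
    show "\<Union>U \<inter> \<Union>V \<subseteq> \<Union>(U \<inter> V)"
    proof
      fix z assume "z \<in> \<Union>U \<inter> \<Union>V"
      then obtain P Q where "P \<in> U" "Q \<in> V" "z \<in> P" "z \<in> Q" by blast
      moreover have "P = Q"
        using quotient_disj[OF assms, of P Q] U V \<open>P \<in> U\<close> \<open>Q \<in> V\<close> \<open>z \<in> P\<close> \<open>z \<in> Q\<close> by blast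
      ultimately show "z \<in> \<Union>(U \<inter> V)" by blast
    qed
  qed blast
  have "openin T (\<Union>U \<inter> \<Union>V)" using U V by (simp add: openin_Int)
  then have "openin T (\<Union>(U \<inter> V))" by (simp only: eq)
  moreover have "U \<inter> V \<subseteq> topspace T // R" using U by blast
  ultimately show "U \<inter> V \<subseteq> topspace T // R \<and> openin T (\<Union>(U \<inter> V))"
    by blast
next
  fix K assume K: "\<forall>U\<in>K. U \<subseteq> topspace T // R \<and> openin T (\<Union>U)"
  have eq: "\<Union>(\<Union>K) = \<Union>((\<lambda>U. \<Union>U) ` K)" by blast
  have "openin T (\<Union>((\<lambda>U. \<Union>U) ` K))" using K by (intro openin_Union) blast
  then show "\<Union>K \<subseteq> topspace T // R \<and> openin T (\<Union>(\<Union>K))"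
    using K by (simp only: eq) blast
qed

definition susp_top ::
  "(nat \<Rightarrow> nat) set \<Rightarrow> ((nat \<Rightarrow> nat) \<Rightarrow> real) \<Rightarrow> ((nat \<Rightarrow> nat) \<Rightarrow> real) \<Rightarrow> ((nat \<Rightarrow> nat) \<Rightarrow> real)
    \<Rightarrow> ((nat \<Rightarrow> nat) \<times> real) set topology" where
  "susp_top X l k b = quot_top (top_of_set (susp_dom X b)) (susp_rel X l k b)"

definition susp_class ::
  "(nat \<Rightarrow> nat) set \<Rightarrow> ((nat \<Rightarrow> nat) \<Rightarrow> real) \<Rightarrow> ((nat \<Rightarrow> nat) \<Rightarrow> real) \<Rightarrow> ((nat \<Rightarrow> nat) \<Rightarrow> real)
    \<Rightarrow> (nat \<Rightarrow> nat) \<Rightarrow> real \<Rightarrow> ((nat \<Rightarrow> nat) \<times> real) set" where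
  "susp_class X l k b x r = susp_rel X l k b `` {(x, r)}"

definition susp_flow ::
  "(nat \<Rightarrow> nat) set \<Rightarrow> ((nat \<Rightarrow> nat) \<Rightarrow> real) \<Rightarrow> ((nat \<Rightarrow> nat) \<Rightarrow> real) \<Rightarrow> ((nat \<Rightarrow> nat) \<Rightarrow> real)
    \<Rightarrow> real \<Rightarrow> ((nat \<Rightarrow> nat) \<times> real) set \<Rightarrow> ((nat \<Rightarrow> nat) \<times> real) set" where
  "susp_flow X l k b t P = susp_rel X l k b `` ((\<lambda>(x, r). (x, r + t)) ` P)"

text \<open>Standard suspension S^1_X = S^{1,0}_{X,0}, with s_X(x) = [x, 0].\<close>
abbreviation one_fun :: "(nat \<Rightarrow> nat) \<Rightarrow> real" where "one_fun \<equiv> (\<lambda>_. 1)"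
abbreviation zero_fun :: "(nat \<Rightarrow> nat) \<Rightarrow> real" where "zero_fun \<equiv> (\<lambda>_. 0)"

definition one_sided_flow_equiv ::
  "nat \<Rightarrow> (nat \<Rightarrow> nat \<Rightarrow> nat) \<Rightarrow> nat \<Rightarrow> (nat \<Rightarrow> nat \<Rightarrow> nat) \<Rightarrow> bool" where
  "one_sided_flow_equiv N A M B \<longleftrightarrow>
    (\<exists>l1 k1 b1 l2 k2 b2 h h' \<Phi>1 \<Phi>2.
       suspension_triplet (XA N A) l1 k1 b1 \<and>
       suspension_triplet (XA M B) l2 k2 b2 \<and>
       homeomorphism (XA N A) (XA M B) h h' \<and>
       continuous_map (susp_top (XA N A) l1 k1 b1) (susp_top (XA M B) one_fun zero_fun zero_fun) \<Phi>1 \<and>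
       continuous_map (susp_top (XA M B) l2 k2 b2) (susp_top (XA N A) one_fun zero_fun zero_fun) \<Phi>2 \<and>
       (\<forall>P\<in>susp_space (XA N A) l1 k1 b1. \<forall>t\<ge>0.
          \<Phi>1 (susp_flow (XA N A) l1 k1 b1 t P) =
          susp_flow (XA M B) one_fun zero_fun zero_fun t (\<Phi>1 P)) \<and>
       (\<forall>P\<in>susp_space (XA M B) l2 k2 b2. \<forall>t\<ge>0.
          \<Phi>2 (susp_flow (XA M B) l2 k2 b2 t P) =
          susp_flow (XA N A) one_fun zero_fun zero_fun t (\<Phi>2 P)) \<and>
       (\<forall>x\<in>XA N A. \<Phi>1 (susp_class (XA N A) l1 k1 b1 x (b1 x)) =
          susp_class (XA M B) one_fun zero_fun zero_fun (h x) 0) \<and>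
       (\<forall>y\<in>XA M B. \<Phi>2 (susp_class (XA M B) l2 k2 b2 y (b2 y)) =
          susp_class (XA N A) one_fun zero_fun zero_fun (h' y) 0))"

definition cont_orbit_equiv ::
  "nat \<Rightarrow> (nat \<Rightarrow> nat \<Rightarrow> nat) \<Rightarrow> nat \<Rightarrow> (nat \<Rightarrow> nat \<Rightarrow> nat) \<Rightarrow> bool" where
  "cont_orbit_equiv N A M B \<longleftrightarrow>
    (\<exists>h h' (k1 :: (nat \<Rightarrow> nat) \<Rightarrow> nat) (l1 :: (nat \<Rightarrow> nat) \<Rightarrow> nat)
          (k2 :: (nat \<Rightarrow> nat) \<Rightarrow> nat) (l2 :: (nat \<Rightarrow> nat) \<Rightarrow> nat).
       homeomorphism (XA N A) (XA M B) h h' \<and>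
       continuous_on (XA N A) k1 \<and> continuous_on (XA N A) l1 \<and>
       continuous_on (XA M B) k2 \<and> continuous_on (XA M B) l2 \<and>
       (\<forall>x\<in>XA N A. (shift ^^ k1 x) (h (shift x)) = (shift ^^ l1 x) (h x)) \<and>
       (\<forall>y\<in>XA M B. (shift ^^ k2 y) (h' (shift y)) = (shift ^^ l2 y) (h' y)))"

end

theory Submission
  imports Defs
begin

text \<open>In the suspension, the point [x, l x] is reached by flowing from [x, b x] for time
  l x - b x, and also, via the identification [x, l x] = [\<sigma> x, k x], by flowing from
  [\<sigma> x, b (\<sigma> x)] for time k x - b (\<sigma> x). Both times are nonnegative integers depending
  continuously on x. A flow map \<Phi> sends [x, b x] to s_B (h x), and in the standard suspension
  flowing from s_B y for an integer time n lands at s_B (\<sigma>^n y). Since s_B is injective,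
  \<sigma>^(l x - b x) (h x) = \<sigma>^(k x - b (\<sigma> x)) (h (\<sigma> x)), which is the cocycle equation of
  a continuous orbit equivalence.\<close>

abbreviation std_class :: "(nat \<Rightarrow> nat) set \<Rightarrow> (nat \<Rightarrow> nat) \<Rightarrow> real \<Rightarrow> ((nat \<Rightarrow> nat) \<times> real) set" where
  "std_class X \<equiv> susp_class X one_fun zero_fun zero_fun"

lemma Ints_eq_if_dist_less_1:
  fixes x y :: real
  assumes "x \<in> \<int>" "y \<in> \<int>" "\<bar>x - y\<bar> < 1"
  shows "x = y"
proof -
  obtain i j where "x = of_int i" "y = of_int j"
    using assms(1,2) by (auto elim!: Ints_cases)
  with assms(3) show ?thesis by simp
qed

lemma continuous_on_nat_floor_Ints:
  fixes f :: "'a::topological_space \<Rightarrow> real"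
  assumes "continuous_on X f" "\<forall>x\<in>X. f x \<in> \<int>"
  shows "continuous_on X (\<lambda>x. nat \<lfloor>f x\<rfloor>)"
  unfolding continuous_on_topological
proof (intro ballI allI impI)
  fix x B assume x: "x \<in> X" and B: "open B" "nat \<lfloor>f x\<rfloor> \<in> B"
  obtain U where U: "open U" "x \<in> U" "\<forall>y\<in>X. y \<in> U \<longrightarrow> f y \<in> ball (f x) 1"
    using assms(1) x unfolding continuous_on_topological
    by (metis open_ball centre_in_ball zero_less_one)
  have "f y = f x" if "y \<in> X" "y \<in> U" for y
    using U(3) assms(2) x that Ints_eq_if_dist_less_1[of "f y" "f x"]
    by (auto simp: dist_real_def abs_minus_commute)
  with U B show "\<exists>U. open U \<and> x \<in> U \<and> (\<forall>y\<in>X. y \<in> U \<longrightarrow> nat \<lfloor>f y\<rfloor> \<in> B)"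
    by (intro exI[of _ U]) simp
qed

lemma of_nat_nat_floor_Ints:
  fixes r :: real
  assumes "r \<in> \<int>" "r \<ge> 0"
  shows "real (nat \<lfloor>r\<rfloor>) = r"
  using assms by (metis Ints_cases floor_of_int of_int_0_le_iff of_nat_nat)

lemma shift_in_XA: "x \<in> XA N A \<Longrightarrow> shift x \<in> XA N A"
  unfolding XA_def shift_def by auto

lemma continuous_on_shift: "continuous_on S shift"
proof -
  have "continuous_on UNIV shift"
    unfolding shift_def by (intro continuous_on_coordinatewise_then_product) simp
  then show ?thesis by (rule continuous_on_subset) simp
qed

lemma funpow_shift_in:
  assumes "\<And>y. y \<in> Y \<Longrightarrow> shift y \<in> Y" "y \<in> Y"
  shows "(shift ^^ n) y \<in> Y"
  by (induction n) (use assms in auto)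

lemma trans_susp_rel: "trans (susp_rel X l k b)"
  unfolding susp_rel_def trans_def by (auto intro: trancl_trans)

lemma sym_susp_rel: "sym (susp_rel X l k b)"
proof -
  have "sym ((susp_step X l k b \<union> (susp_step X l k b)\<inverse>)\<^sup>+)"
    by (rule sym_trancl) (auto simp: sym_def)
  then show ?thesis unfolding susp_rel_def sym_def by auto
qed

lemma susp_rel_refl:
  "x \<in> X \<Longrightarrow> r \<ge> b x \<Longrightarrow> ((x, r), (x, r)) \<in> susp_rel X l k b"
  unfolding susp_rel_def susp_dom_def by auto

lemma susp_class_eqI:
  "(p, q) \<in> susp_rel X l k b \<Longrightarrow> susp_rel X l k b `` {p} = susp_rel X l k b `` {q}"
  using trans_susp_rel[of X l k b] sym_susp_rel[of X l k b]
  unfolding trans_def sym_def by blast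

lemma susp_class_in_space:
  "x \<in> X \<Longrightarrow> r \<ge> b x \<Longrightarrow> susp_class X l k b x r \<in> susp_space X l k b"
  unfolding susp_space_def susp_class_def by (intro quotientI) (auto simp: susp_dom_def)

lemma susp_class_at_roof:
  assumes "x \<in> X" "l x \<ge> b x"
  shows "susp_class X l k b x (l x) = susp_class X l k b (shift x) (k x)"
proof -
  have "((x, l x), (shift x, l x - (l x - k x))) \<in> susp_step X l k b"
    using assms unfolding susp_step_def by blast
  then have "((x, l x), (shift x, k x)) \<in> susp_rel X l k b" unfolding susp_rel_def by auto
  then show ?thesis unfolding susp_class_def by (rule susp_class_eqI)
qed

lemma susp_rel_translate:
  assumes "((x, r), (y, s)) \<in> susp_rel X l k b" "t \<ge> 0"
  shows "((x, r + t), (y, s + t)) \<in> susp_rel X l k b"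
proof -
  let ?S = "susp_step X l k b \<union> (susp_step X l k b)\<inverse>"
  let ?\<tau> = "\<lambda>(x, r). (x, r + t)"
  have "((x, r + t), (shift x, r - (l x - k x) + t)) \<in> susp_step X l k b"
    if "x \<in> X" "r \<ge> b x" "r \<ge> l x" for x r
    using that assms(2) unfolding susp_step_def by (auto intro!: exI[of _ x] exI[of _ "r + t"])
  then have translate_step: "(?\<tau> p, ?\<tau> q) \<in> ?S" if "(p, q) \<in> ?S" for p q
    using that unfolding susp_step_def by auto
  have "(?\<tau> p, ?\<tau> q) \<in> ?S\<^sup>+" if "(p, q) \<in> ?S\<^sup>+" for p q
    using that
  proof (induction rule: trancl_induct)
    case (base q)
    then show ?case using translate_step by blast
  next
    case (step q q')
    then show ?case using translate_step by (meson trancl_into_trancl)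
  qed
  then show ?thesis
    using assms unfolding susp_rel_def susp_dom_def by auto
qed

lemma susp_flow_class:
  assumes "x \<in> X" "r \<ge> b x" "t \<ge> 0"
  shows "susp_flow X l k b t (susp_class X l k b x r) = susp_class X l k b x (r + t)"
proof -
  let ?R = "susp_rel X l k b"
  have "z \<in> ?R `` {(x, r + t)}" if "((x, r), (y, s)) \<in> ?R" "((y, s + t), z) \<in> ?R" for y s z
    using susp_rel_translate[OF that(1) assms(3)] that(2) trans_susp_rel[of X l k b]
    unfolding trans_def by blast
  then have "susp_flow X l k b t (susp_class X l k b x r) \<subseteq> susp_class X l k b x (r + t)"
    unfolding susp_flow_def susp_class_def by auto
  moreover have "((x, r), (x, r)) \<in> ?R" using assms by (intro susp_rel_refl)
  then have "susp_class X l k b x (r + t) \<subseteq> susp_flow X l k b t (susp_class X l k b x r)"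
    unfolding susp_flow_def susp_class_def by force
  ultimately show ?thesis by (rule antisym)
qed

lemma std_flow_of_nat:
  assumes "\<And>y. y \<in> Y \<Longrightarrow> shift y \<in> Y" "y \<in> Y"
  shows "susp_flow Y one_fun zero_fun zero_fun (real n) (std_class Y y 0)
       = std_class Y ((shift ^^ n) y) 0"
  using assms(2)
proof (induction n arbitrary: y)
  case 0
  then show ?case by (simp add: susp_flow_class)
next
  case (Suc n)
  have "((y, real (Suc n)), (shift y, real (Suc n) - (1 - 0))) \<in> susp_step Y one_fun zero_fun zero_fun"
    using Suc.prems unfolding susp_step_def by force
  then have "((y, real (Suc n)), (shift y, real n)) \<in> susp_rel Y one_fun zero_fun zero_fun"
    unfolding susp_rel_def by auto
  then have "std_class Y y (real (Suc n)) = std_class Y (shift y) (real n)"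
    unfolding susp_class_def by (rule susp_class_eqI)
  also have "\<dots> = std_class Y ((shift ^^ n) (shift y)) 0"
    using Suc.IH[OF assms(1)[OF Suc.prems]] Suc.prems assms(1) by (simp add: susp_flow_class)
  finally show ?case using Suc.prems by (simp add: susp_flow_class funpow_swap1)
qed

lemma std_rel_invariant:
  assumes "(p, q) \<in> susp_rel X one_fun zero_fun zero_fun"
  shows "(shift ^^ nat \<lfloor>snd p\<rfloor>) (fst p) = (shift ^^ nat \<lfloor>snd q\<rfloor>) (fst q)"
proof -
  let ?S = "susp_step X one_fun zero_fun zero_fun \<union> (susp_step X one_fun zero_fun zero_fun)\<inverse>"
  let ?G = "\<lambda>p. (shift ^^ nat \<lfloor>snd p\<rfloor>) (fst p)"
  have "(shift ^^ nat \<lfloor>r\<rfloor>) x = (shift ^^ nat \<lfloor>r - (1 - 0)\<rfloor>) (shift x)" if "r \<ge> 1" for x and r :: real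
  proof -
    from that have "nat \<lfloor>r\<rfloor> = Suc (nat \<lfloor>r - 1\<rfloor>)" by linarith
    then show ?thesis by (simp add: funpow_swap1)
  qed
  then have invariant_step: "?G p = ?G q" if "(p, q) \<in> ?S" for p q
    using that unfolding susp_step_def by auto
  have "?G p = ?G q" if "(p, q) \<in> ?S\<^sup>+" for p q
    using that
  proof (induction rule: trancl_induct)
    case (base q)
    then show ?case by (rule invariant_step)
  next
    case (step q q')
    then show ?case using invariant_step[OF step(2)] by simp
  qed
  with assms show ?thesis unfolding susp_rel_def by auto
qed

lemma std_class_inj:
  assumes "y \<in> X" "y' \<in> X" "std_class X y 0 = std_class X y' 0"
  shows "y = y'"
proof -
  have "((y, 0), (y', 0)) \<in> susp_rel X one_fun zero_fun zero_fun"
    using assms susp_rel_refl[of y' X zero_fun 0] unfolding susp_class_def by blast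
  from std_rel_invariant[OF this] show ?thesis by simp
qed

lemma susp_flow_to_roof:
  assumes "suspension_triplet X l k b" "\<And>x. x \<in> X \<Longrightarrow> shift x \<in> X" "x \<in> X"
  shows "susp_flow X l k b (l x - b x) (susp_class X l k b x (b x)) = susp_class X l k b x (l x)"
    and "susp_flow X l k b (k x - b (shift x)) (susp_class X l k b (shift x) (b (shift x)))
           = susp_class X l k b x (l x)"
  using assms susp_class_at_roof[of x X b l k]
  by (auto simp: suspension_triplet_def susp_flow_class)

lemma flow_map_cocycle:
  assumes trip: "suspension_triplet X l k b"
    and X_shift: "\<And>x. x \<in> X \<Longrightarrow> shift x \<in> X" and Y_shift: "\<And>y. y \<in> Y \<Longrightarrow> shift y \<in> Y"
    and h: "\<forall>x\<in>X. h x \<in> Y"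
    and flow: "\<forall>P\<in>susp_space X l k b. \<forall>t\<ge>0.
          \<Phi> (susp_flow X l k b t P) = susp_flow Y one_fun zero_fun zero_fun t (\<Phi> P)"
    and base: "\<forall>x\<in>X. \<Phi> (susp_class X l k b x (b x)) = std_class Y (h x) 0"
  shows "\<exists>k' l' :: (nat \<Rightarrow> nat) \<Rightarrow> nat. continuous_on X k' \<and> continuous_on X l' \<and>
     (\<forall>x\<in>X. (shift ^^ k' x) (h (shift x)) = (shift ^^ l' x) (h x))"
proof -
  define tL where "tL x = l x - b x" for x
  define tK where "tK x = k x - b (shift x)" for x
  have tL: "tL x \<in> \<int>" "tL x \<ge> 0" and tK: "tK x \<in> \<int>" "tK x \<ge> 0" if "x \<in> X" for x
    using trip that unfolding suspension_triplet_def tL_def tK_def by auto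
  have "continuous_on X (b \<circ> shift)"
    using trip X_shift by (intro continuous_on_compose continuous_on_shift)
      (auto simp: suspension_triplet_def elim: continuous_on_subset)
  then have "continuous_on X tL" "continuous_on X tK"
    using trip unfolding tL_def tK_def suspension_triplet_def
    by (auto simp: o_def intro!: continuous_intros)
  then have cont: "continuous_on X (\<lambda>x. nat \<lfloor>tK x\<rfloor>)" "continuous_on X (\<lambda>x. nat \<lfloor>tL x\<rfloor>)"
    using tL tK by (auto intro!: continuous_on_nat_floor_Ints)
  have image: "\<Phi> (susp_flow X l k b t (susp_class X l k b x (b x)))
      = std_class Y ((shift ^^ nat \<lfloor>t\<rfloor>) (h x)) 0" if "x \<in> X" "t \<in> \<int>" "t \<ge> 0" for x t
  proof -
    have "\<Phi> (susp_flow X l k b t (susp_class X l k b x (b x)))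
        = susp_flow Y one_fun zero_fun zero_fun t (std_class Y (h x) 0)"
      using flow base that by (simp add: susp_class_in_space)
    also have "\<dots> = susp_flow Y one_fun zero_fun zero_fun (real (nat \<lfloor>t\<rfloor>)) (std_class Y (h x) 0)"
      using that by (simp add: of_nat_nat_floor_Ints)
    also have "\<dots> = std_class Y ((shift ^^ nat \<lfloor>t\<rfloor>) (h x)) 0"
      using h that by (intro std_flow_of_nat Y_shift) auto
    finally show ?thesis .
  qed
  have "(shift ^^ nat \<lfloor>tK x\<rfloor>) (h (shift x)) = (shift ^^ nat \<lfloor>tL x\<rfloor>) (h x)" if x: "x \<in> X" for x
  proof -
    have sx: "shift x \<in> X" using X_shift x .
    have "std_class Y ((shift ^^ nat \<lfloor>tK x\<rfloor>) (h (shift x))) 0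
        = std_class Y ((shift ^^ nat \<lfloor>tL x\<rfloor>) (h x)) 0"
      using image[OF sx tK[OF x]] image[OF x tL[OF x]] susp_flow_to_roof[OF trip X_shift x]
      by (simp add: tL_def tK_def)
    then show ?thesis
      using std_class_inj funpow_shift_in[OF Y_shift] h x sx by metis
  qed
  with cont show ?thesis by blast
qed

theorem proposition3p3:
  fixes N M :: nat and A B :: "nat \<Rightarrow> nat \<Rightarrow> nat"
  assumes "N > 1" and "M > 1"
    and "zero_one_matrix N A" and "irreducible_matrix N A" and "\<not> permutation_matrix N A"
    and "zero_one_matrix M B" and "irreducible_matrix M B" and "\<not> permutation_matrix M B"
    and "one_sided_flow_equiv N A M B"
  shows "cont_orbit_equiv N A M B"
proof -
  obtain l1 k1 b1 l2 k2 b2 h h' \<Phi>1 \<Phi>2 where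
    t1: "suspension_triplet (XA N A) l1 k1 b1" and
    t2: "suspension_triplet (XA M B) l2 k2 b2" and
    hom: "homeomorphism (XA N A) (XA M B) h h'" and
    flow1: "\<forall>P\<in>susp_space (XA N A) l1 k1 b1. \<forall>t\<ge>0.
      \<Phi>1 (susp_flow (XA N A) l1 k1 b1 t P) = susp_flow (XA M B) one_fun zero_fun zero_fun t (\<Phi>1 P)" and
    flow2: "\<forall>P\<in>susp_space (XA M B) l2 k2 b2. \<forall>t\<ge>0.
      \<Phi>2 (susp_flow (XA M B) l2 k2 b2 t P) = susp_flow (XA N A) one_fun zero_fun zero_fun t (\<Phi>2 P)" and
    base1: "\<forall>x\<in>XA N A. \<Phi>1 (susp_class (XA N A) l1 k1 b1 x (b1 x)) = std_class (XA M B) (h x) 0" and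
    base2: "\<forall>y\<in>XA M B. \<Phi>2 (susp_class (XA M B) l2 k2 b2 y (b2 y)) = std_class (XA N A) (h' y) 0"
    using assms(9) unfolding one_sided_flow_equiv_def by blast
  have "\<forall>x\<in>XA N A. h x \<in> XA M B" "\<forall>y\<in>XA M B. h' y \<in> XA N A"
    using hom unfolding homeomorphism_def by auto
  then show ?thesis
    using hom flow_map_cocycle[OF t1 shift_in_XA shift_in_XA _ flow1 base1]
      flow_map_cocycle[OF t2 shift_in_XA shift_in_XA _ flow2 base2]
    unfolding cont_orbit_equiv_def by blast
qed

end
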